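(* Let the setting and notation be as in the context, and suppose the Concentration Assumption and the $L_1$-Consistency Assumption hold. Assume that the (stochastic) map $\theta\mapsto \hat S(\hat{\boldsymbol\beta}_\theta)$ is either continuous with a single root $\tilde\theta$, or non-decreasing (with $\tilde\theta$ a root). Suppose further that for every $\epsilon>0$, $$\mathbf v^{*T}E_{\mathbf t}(\boldsymbol\beta^*_{\theta^*-\epsilon})\cdot \mathbf v^{*T}E_{\mathbf t}(\boldsymbol\beta^*_{\theta^*+\epsilon})<0 .$$ Then for every $\epsilon>0$, $\lim_{n\to\infty}\mathbb P^*(|\tilde\theta-\theta^*|>\epsilon)=0$.
   Context: Data: a random matrix $\mathbf Z\in\mathbb R^{n\times q}$ whose law depends on an unknown parameter; $\mathbb P^*$ denotes probability under the true parameter $\boldsymbol\beta^*\in\mathbb R^d$ (and $\mathbb E^*$ expectation). Asymptotics are as $n\to\infty$; $d$ may depend on $n$. Let $\mathbf t(\mathbf Z,\boldsymbol\beta):\mathbb R^{n\times q}\times\mathbb R^d\to\mathbb R^d$ be an estimating equation, twice differentiable in $\boldsymbol\beta$, with $E_{\mathbf t}(\boldsymbol\beta)=\lim_{n\to\infty}\mathbb E\,\mathbf t(\mathbf Z,\boldsymbol\beta)$, and $\boldsymbol\beta^*$ the unique solution of $E_{\mathbf t}(\boldsymbol\beta)=0$. Let $\mathbf T(\mathbf Z,\boldsymbol\beta)=\partial \mathbf t(\mathbf Z,\boldsymbol\beta)/\partial\boldsymbol\beta\in\mathbb R^{d\times d}$ and $E_{\mathbf T}(\boldsymbol\beta)=\lim_{n\to\infty}\mathbb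 E\,\mathbf T(\mathbf Z,\boldsymbol\beta)$, assumed invertible at $\boldsymbol\beta^*$. Write $\boldsymbol\beta=(\theta,\boldsymbol\gamma^T)^T$ with $\theta\in\mathbb R$ the first coordinate, $\boldsymbol\beta^*=(\theta^*,\boldsymbol\gamma^{*T})^T$; for any $\boldsymbol\beta=(\theta,\boldsymbol\gamma^T)^T$ and scalar $\check\theta$, $\boldsymbol\beta_{\check\theta}:=(\check\theta,\boldsymbol\gamma^T)^T$. Let $\mathbf v^{*T}$ be the first row of $[E_{\mathbf T}(\boldsymbol\beta^* )]^{-1}$. Estimators: $\hat{\boldsymbol\beta}=(\hat\theta,\hat{\boldsymbol\gamma}^T)^T=\arg\min\|\boldsymbol\beta\|_1$ subject to $\|\mathbf t(\mathbf Z,\boldsymbol\beta)\|_\infty\le\lambda$, and $\hat{\mathbf v}=\arg\min\|\mathbf v\|_1$ subject to $\|\mathbf v^T\mathbf T(\mathbf Z,\hat{\boldsymbol\beta})-\mathbf e_1\|_\infty\le\lambda'$, where $\mathbf e_1=(1,0,\dots,0)$ is a row vector and $\lambda,\lambda'>0$ are tuning parameters. Let $\hat S(\boldsymbol\beta)=\hat{\mathbf v}^T\mathbf t(\mathbf Z,\boldsymbol\beta)$; $\tilde\theta$ denotes a root of $\theta\mapsto\hat S(\hat{\boldsymbol\beta}_\theta)=\hat S(\theta,\hat{\boldsymbol\gamma})$. For a matrix $\mathbf A$, $[\mathbf A]_{-1}$ is $\mathbf A$ with its first column removed. Concentration Assumption: there is a neighborhood $\mathcal N_{\theta^*}$ of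 $\theta^*$ and functions $r_1(n,\theta),r_2(n,\theta),r_3(n,\theta)$ with $\sup_{\theta\in\mathcal N_{\theta^*}}\max_i r_i(n,\theta)=o(1)$ such that for all $\theta\in\mathcal N_{\theta^*}$: $\lim_n\mathbb P^*(\|\mathbf t(\mathbf Z,\boldsymbol\beta^*_\theta)-E_{\mathbf t}(\boldsymbol\beta^*_\theta)\|_\infty\le r_1(n,\theta))=1$; $\lim_n\mathbb P^*(|\mathbf v^{*T}\mathbf t(\mathbf Z,\boldsymbol\beta^*_\theta)-\mathbf v^{*T}E_{\mathbf t}(\boldsymbol\beta^*_\theta)|\le r_2(n,\theta))=1$; $\lim_n\mathbb P^*(\sup_{\nu\in[0,1]}\|\hat{\mathbf v}^T\mathbf T(\mathbf Z,\tilde{\boldsymbol\beta}_\nu)-\mathbf v^{*T}E_{\mathbf T}(\boldsymbol\beta^*_\theta)\|_\infty\le r_3(n,\theta))=1$ where $\tilde{\boldsymbol\beta}_\nu=\nu\hat{\boldsymbol\beta}_\theta+(1-\nu)\boldsymbol\beta^*_\theta$; and moreover $\sup_{\theta\in\mathcal N_{\theta^*}}\|E_{\mathbf t}(\boldsymbol\beta^*_\theta)\|_\infty<\infty$ and $\sup_{\theta\in\mathcal N_{\theta^*}}\|\mathbf v^{*T}[E_{\mathbf T}(\boldsymbol\beta^*_\theta)]_{-1}\|_\infty<\infty$. $L_1$-Consistency Assumption: $\lim_n\mathbb P^*(\|\hat{\boldsymbol\beta}-\boldsymbol\beta^*\|_1\le r_4(n))=1$ and $\lim_n\mathbb P^*(\|\hat{\mathbf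 v}-\mathbf v^*\|_1\le r_5(n))=1$ with $\max(r_4(n),r_5(n))=o(1)$. *)

theory Defs
  imports "HOL-Probability.Probability"
begin

text \<open>Vectors are modelled as real sequences \<open>nat \<Rightarrow> real\<close>; in the n-th model only
the coordinates below \<open>d n\<close> are meaningful. Coordinate 0 is \<open>\<theta>\<close>.\<close>

definition l1 :: "nat \<Rightarrow> (nat \<Rightarrow> real) \<Rightarrow> real" where
  "l1 d x = (\<Sum>j<d. \<bar>x j\<bar>)"

definition supn :: "nat \<Rightarrow> (nat \<Rightarrow> real) \<Rightarrow> real" where
  "supn d x = Max (insert 0 ((\<lambda>j. \<bar>x j\<bar>) ` {..<d}))"

definition supp_in :: "nat \<Rightarrow> (nat \<Rightarrow> real) \<Rightarrow> bool" where
  "supp_in d x \<longleftrightarrow> (\<forall>j. d \<le> j \<longrightarrow> x j = 0)"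

definition e1 :: "nat \<Rightarrow> real" where
  "e1 j = (if j = 0 then 1 else 0)"

text \<open>Frechet differentiability of \<open>f : R^d \<rightarrow> R\<close> at \<open>x\<close> with gradient \<open>D\<close>
  (using the l1 norm; all norms on R^d are equivalent).\<close>
definition frechet_diff :: "nat \<Rightarrow> ((nat \<Rightarrow> real) \<Rightarrow> real) \<Rightarrow> (nat \<Rightarrow> real) \<Rightarrow> (nat \<Rightarrow> real) \<Rightarrow> bool" where
  "frechet_diff d f D x \<longleftrightarrow>
     (\<forall>e>0. \<exists>\<delta>>0. \<forall>h. supp_in d h \<and> l1 d h < \<delta> \<longrightarrow>
        \<bar>f (\<lambda>j. x j + h j) - f x - (\<Sum>j<d. D j * h j)\<bar> \<le> e * l1 d h)"

text \<open>Products with the (possibly infinite) limiting vector \<open>v*\<close>.\<close>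
definition vdot :: "(nat \<Rightarrow> real) \<Rightarrow> (nat \<Rightarrow> real) \<Rightarrow> real" where
  "vdot v x = infsum (\<lambda>j. v j * x j) UNIV"

definition vrow :: "(nat \<Rightarrow> real) \<Rightarrow> (nat \<Rightarrow> nat \<Rightarrow> real) \<Rightarrow> nat \<Rightarrow> real" where
  "vrow v A j = infsum (\<lambda>k. v k * A k j) UNIV"

definition active :: "(nat \<Rightarrow> nat) \<Rightarrow> nat set" where
  "active d = {j. \<exists>n. j < d n}"

definition is_l1_min :: "nat \<Rightarrow> ((nat \<Rightarrow> real) \<Rightarrow> (nat \<Rightarrow> real)) \<Rightarrow> real \<Rightarrow> (nat \<Rightarrow> real) \<Rightarrow> bool" where
  "is_l1_min d g lam b \<longleftrightarrow> supp_in d b \<and> supn d (g b) \<le> lam \<and>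
     (\<forall>c. supp_in d c \<and> supn d (g c) \<le> lam \<longrightarrow> l1 d b \<le> l1 d c)"

definition Shat :: "nat \<Rightarrow> (nat \<Rightarrow> real) \<Rightarrow> ((nat \<Rightarrow> real) \<Rightarrow> (nat \<Rightarrow> real)) \<Rightarrow> (nat \<Rightarrow> real) \<Rightarrow> real" where
  "Shat d v tz \<beta> = (\<Sum>k<d. v k * tz \<beta> k)"

end

theory Submission
  imports Defs
begin

text \<open>On an event whose probability tends to one, the empirical score
\<open>\<theta> \<mapsto> \<hat>S(\<hat>\<beta>\<^sub>\<theta>)\<close> is close at the two points \<open>\<theta>\<^sup>* \<plusminus> \<epsilon>\<close> to the population score
\<open>\<theta> \<mapsto> v\<^sup>*\<^sup>T E\<^sub>t(\<beta>\<^sup>*\<^sub>\<theta>)\<close>: a mean value expansion along the segment from \<open>\<beta>\<^sup>*\<^sub>\<theta>\<close> to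
\<open>\<hat>\<beta>\<^sub>\<theta>\<close> bounds the difference by the concentration radii and the \<open>L\<^sub>1\<close> errors of
\<open>\<hat>\<beta>\<close> and \<open>\<hat>v\<close>. The population score changes sign between \<open>\<theta>\<^sup>* - \<epsilon>\<close> and \<open>\<theta>\<^sup>* + \<epsilon>\<close>,
hence so does the empirical one, and the intermediate value theorem (continuous case
with a unique root) or monotonicity traps \<open>\<tilde>\<theta>\<close> between these two points.\<close>

lemma supn_ge: "j < d \<Longrightarrow> \<bar>x j\<bar> \<le> supn d x"
  unfolding supn_def by (intro Max_ge) auto

lemma supn_nonneg: "0 \<le> supn d x"
  unfolding supn_def by (intro Max_ge) auto

lemma l1_nonneg: "0 \<le> l1 d x"
  unfolding l1_def by (intro sum_nonneg) auto

lemma l1_scale: "l1 d (\<lambda>j. c * h j) = \<bar>c\<bar> * l1 d h"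
  unfolding l1_def by (simp add: abs_mult sum_distrib_left)

lemma frechet_diff_directional_deriv:
  assumes fd: "frechet_diff d f D x" and h: "supp_in d h"
  shows "((\<lambda>s. f (\<lambda>j. x j + (s - s0) * h j)) has_real_derivative (\<Sum>j<d. D j * h j)) (at s0)"
proof -
  define L where "L = l1 d h"
  have L0: "0 \<le> L" unfolding L_def by (rule l1_nonneg)
  have x0: "(\<lambda>j. x j + (s0 - s0) * h j) = x" by auto
  show ?thesis
    unfolding has_field_derivative_iff x0
  proof (rule LIM_I)
    fix r :: real assume r: "0 < r"
    define e where "e = r / (L + 1)"
    have e: "0 < e" using r L0 unfolding e_def by auto
    from fd e obtain \<delta> where \<delta>: "\<delta> > 0" and small: "\<forall>h. supp_in d h \<and> l1 d h < \<delta> \<longrightarrow>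
        \<bar>f (\<lambda>j. x j + h j) - f x - (\<Sum>j<d. D j * h j)\<bar> \<le> e * l1 d h"
      unfolding frechet_diff_def by blast
    show "\<exists>s>0. \<forall>y. y \<noteq> s0 \<and> norm (y - s0) < s \<longrightarrow>
           norm ((f (\<lambda>j. x j + (y - s0) * h j) - f x) / (y - s0) - (\<Sum>j<d. D j * h j)) < r"
    proof (intro exI[of _ "\<delta> / (L + 1)"] conjI allI impI)
      show "0 < \<delta> / (L + 1)" using \<delta> L0 by auto
      fix y assume y: "y \<noteq> s0 \<and> norm (y - s0) < \<delta> / (L + 1)"
      define c where "c = y - s0"
      have c0: "c \<noteq> 0" using y unfolding c_def by auto
      have "\<bar>c\<bar> * L \<le> \<delta> / (L + 1) * L" using y L0 unfolding c_def by (intro mult_right_mono) auto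
      also have "\<dots> < \<delta>" using \<delta> L0 by (simp add: field_simps)
      finally have "l1 d (\<lambda>j. c * h j) < \<delta>" by (simp add: l1_scale L_def)
      moreover have "supp_in d (\<lambda>j. c * h j)" using h unfolding supp_in_def by auto
      ultimately have "\<bar>f (\<lambda>j. x j + c * h j) - f x - (\<Sum>j<d. D j * (c * h j))\<bar> \<le> e * (\<bar>c\<bar> * L)"
        using small[rule_format, of "\<lambda>j. c * h j"] by (simp add: l1_scale L_def)
      moreover have "(f (\<lambda>j. x j + c * h j) - f x) / c - (\<Sum>j<d. D j * h j)
          = (f (\<lambda>j. x j + c * h j) - f x - (\<Sum>j<d. D j * (c * h j))) / c"
        using c0 by (simp add: field_simps sum_distrib_left)
      ultimately have "\<bar>(f (\<lambda>j. x j + c * h j) - f x) / c - (\<Sum>j<d. D j * h j)\<bar> \<le> e * L"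
        using c0 by (simp add: abs_divide divide_le_eq mult_ac)
      also have "e * L < r" using r L0 unfolding e_def by (simp add: field_simps)
      finally show "norm ((f (\<lambda>j. x j + (y - s0) * h j) - f x) / (y - s0) - (\<Sum>j<d. D j * h j)) < r"
        unfolding c_def by simp
    qed
  qed
qed

lemma Shat_mean_value:
  fixes tz :: "(nat \<Rightarrow> real) \<Rightarrow> nat \<Rightarrow> real" and Tz :: "(nat \<Rightarrow> real) \<Rightarrow> nat \<Rightarrow> nat \<Rightarrow> real"
  assumes loc: "\<forall>\<beta> \<beta>'. (\<forall>j<d. \<beta> j = \<beta>' j) \<longrightarrow> tz \<beta> = tz \<beta>'"
    and der: "\<forall>\<beta> i. i < d \<longrightarrow> frechet_diff d (\<lambda>b. tz b i) (\<lambda>j. Tz \<beta> i j) \<beta>"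
  obtains \<nu> where "0 < \<nu>" "\<nu> < 1"
    "Shat d v tz a - Shat d v tz b =
       (\<Sum>j<d. (\<Sum>k<d. v k * Tz (\<lambda>i. \<nu> * a i + (1 - \<nu>) * b i) k j) * (a j - b j))"
proof -
  define p where "p = (\<lambda>\<nu>::real. \<lambda>i. \<nu> * a i + (1 - \<nu>) * b i)"
  define h where "h = (\<lambda>j. if j < d then a j - b j else 0)"
  define g where "g = (\<lambda>\<nu>. \<Sum>k<d. v k * tz (p \<nu>) k)"
  define g' where "g' = (\<lambda>\<nu>. \<Sum>k<d. v k * (\<Sum>j<d. Tz (p \<nu>) k j * h j))"
  have h_supp: "supp_in d h" unfolding supp_in_def h_def by auto
  have "(g has_real_derivative g' \<nu>) (at \<nu>)" for \<nu>
    unfolding g_def g'_def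
  proof (intro DERIV_sum DERIV_cmult)
    fix k assume k: "k \<in> {..<d}"
    have "tz (p s) = tz (\<lambda>j. p \<nu> j + (s - \<nu>) * h j)" for s
      by (rule loc[rule_format]) (simp add: p_def h_def algebra_simps)
    then have "(\<lambda>s. tz (p s) k) = (\<lambda>s. tz (\<lambda>j. p \<nu> j + (s - \<nu>) * h j) k)"
      by simp
    then show "((\<lambda>s. tz (p s) k) has_real_derivative (\<Sum>j<d. Tz (p \<nu>) k j * h j)) (at \<nu>)"
      using frechet_diff_directional_deriv[OF der[rule_format, of k "p \<nu>"] h_supp, of \<nu>] k by simp
  qed
  then obtain \<nu> where \<nu>: "0 < \<nu>" "\<nu> < 1" "g 1 - g 0 = (1 - 0) * g' \<nu>"
    using MVT2[of 0 1 g g'] by auto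
  have "g' \<nu> = (\<Sum>k<d. \<Sum>j<d. v k * Tz (p \<nu>) k j * h j)"
    by (simp add: g'_def sum_distrib_left mult.assoc)
  also have "\<dots> = (\<Sum>j<d. \<Sum>k<d. v k * Tz (p \<nu>) k j * h j)" by (rule sum.swap)
  also have "\<dots> = (\<Sum>j<d. (\<Sum>k<d. v k * Tz (p \<nu>) k j) * (a j - b j))"
    by (intro sum.cong) (auto simp: h_def sum_distrib_right)
  finally show ?thesis
    using \<nu> that[of \<nu>] by (simp add: g_def p_def Shat_def)
qed

lemma Shat_deviation_bound:
  fixes tz :: "(nat \<Rightarrow> real) \<Rightarrow> nat \<Rightarrow> real" and Tz :: "(nat \<Rightarrow> real) \<Rightarrow> nat \<Rightarrow> nat \<Rightarrow> real"
  assumes loc: "\<forall>\<beta> \<beta>'. (\<forall>j<d. \<beta> j = \<beta>' j) \<longrightarrow> tz \<beta> = tz \<beta>'"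
    and der: "\<forall>\<beta> i. i < d \<longrightarrow> frechet_diff d (\<lambda>b. tz b i) (\<lambda>j. Tz \<beta> i j) \<beta>"
    and t_conc: "supn d (\<lambda>j. tz (bs(0 := \<theta>)) j - E j) \<le> r1"
    and score_conc: "\<bar>(\<Sum>j<d. vs j * tz (bs(0 := \<theta>)) j) - c\<bar> \<le> r2"
    and T_conc: "\<forall>\<nu>\<in>{0..1}. supn d (\<lambda>j. (\<Sum>k<d. vh k *
               Tz (\<lambda>i. \<nu> * (bh(0 := \<theta>)) i + (1 - \<nu>) * (bs(0 := \<theta>)) i) k j) - w j) \<le> r3"
    and E_bound: "\<forall>j. \<bar>E j\<bar> \<le> B1" and w_bound: "\<forall>j\<ge>1. \<bar>w j\<bar> \<le> B2"
    and bh_err: "l1 d (\<lambda>j. bh j - bs j) \<le> R" and vh_err: "l1 d (\<lambda>j. vh j - vs j) \<le> R"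
  shows "\<bar>Shat d vh tz (bh(0 := \<theta>)) - c\<bar> \<le> r2 + R * (r1 + B1) + (r3 + B2) * R"
proof -
  define b where "b = bs(0 := \<theta>)"
  obtain \<nu> where \<nu>: "0 < \<nu>" "\<nu> < 1" and mvt:
    "Shat d vh tz (bh(0 := \<theta>)) - Shat d vh tz b =
       (\<Sum>j<d. (\<Sum>k<d. vh k * Tz (\<lambda>i. \<nu> * (bh(0 := \<theta>)) i + (1 - \<nu>) * b i) k j)
              * ((bh(0 := \<theta>)) j - b j))"
    using Shat_mean_value[OF loc der] .
  have r1_nonneg: "0 \<le> r1" using t_conc supn_nonneg by (rule order_trans[rotated])
  have r3_nonneg: "0 \<le> r3" using T_conc[rule_format, of 0] supn_nonneg by (auto intro: order_trans)
  have B1_nonneg: "0 \<le> B1" using E_bound[rule_format, of 0] by linarith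
  have B2_nonneg: "0 \<le> B2" using w_bound[rule_format, of 1] by linarith
  have row_bound: "\<bar>(\<Sum>k<d. vh k * Tz (\<lambda>i. \<nu> * (bh(0 := \<theta>)) i + (1 - \<nu>) * b i) k j)\<bar> \<le> r3 + B2"
    if "j < d" "1 \<le> j" for j
  proof -
    have "\<bar>(\<Sum>k<d. vh k * Tz (\<lambda>i. \<nu> * (bh(0 := \<theta>)) i + (1 - \<nu>) * b i) k j) - w j\<bar> \<le> r3"
      using T_conc[rule_format, of \<nu>] \<nu> supn_ge[OF that(1)] unfolding b_def
      by (meson atLeastAtMost_iff less_imp_le order_trans)
    then show ?thesis using w_bound that(2) by fastforce
  qed
  have "\<bar>Shat d vh tz (bh(0 := \<theta>)) - Shat d vh tz b\<bar> \<le> (\<Sum>j<d. (r3 + B2) * \<bar>bh j - bs j\<bar>)"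
    unfolding mvt
  proof (rule order_trans[OF sum_abs sum_mono])
    fix j assume "j \<in> {..<d}"
    then show "\<bar>(\<Sum>k<d. vh k * Tz (\<lambda>i. \<nu> * (bh(0 := \<theta>)) i + (1 - \<nu>) * b i) k j)
              * ((bh(0 := \<theta>)) j - b j)\<bar> \<le> (r3 + B2) * \<bar>bh j - bs j\<bar>"
    proof (cases "j = 0")
      case False
      then show ?thesis
        using row_bound[of j] \<open>j \<in> {..<d}\<close> unfolding abs_mult b_def
        by (simp add: mult_right_mono)
    qed (use r3_nonneg B2_nonneg in \<open>simp add: b_def\<close>)
  qed
  also have "\<dots> = (r3 + B2) * l1 d (\<lambda>j. bh j - bs j)"
    by (simp add: l1_def sum_distrib_left)
  also have "\<dots> \<le> (r3 + B2) * R"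
    using bh_err r3_nonneg B2_nonneg by (intro mult_left_mono) auto
  finally have segment: "\<bar>Shat d vh tz (bh(0 := \<theta>)) - Shat d vh tz b\<bar> \<le> (r3 + B2) * R" .
  have "\<bar>Shat d vh tz b - Shat d vs tz b\<bar> \<le> (\<Sum>k<d. \<bar>vh k - vs k\<bar> * (r1 + B1))"
    unfolding Shat_def sum_subtractf[symmetric] left_diff_distrib[symmetric]
  proof (rule order_trans[OF sum_abs sum_mono])
    fix k assume k: "k \<in> {..<d}"
    have "\<bar>tz b k\<bar> \<le> r1 + B1"
      using supn_ge[of k d "\<lambda>j. tz b j - E j"] k t_conc E_bound[rule_format, of k]
      unfolding b_def by auto
    then show "\<bar>(vh k - vs k) * tz b k\<bar> \<le> \<bar>vh k - vs k\<bar> * (r1 + B1)"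
      by (simp add: abs_mult mult_left_mono)
  qed
  also have "\<dots> = l1 d (\<lambda>j. vh j - vs j) * (r1 + B1)"
    by (simp add: l1_def sum_distrib_right)
  also have "\<dots> \<le> R * (r1 + B1)"
    using vh_err r1_nonneg B1_nonneg by (intro mult_right_mono) auto
  finally have direction: "\<bar>Shat d vh tz b - Shat d vs tz b\<bar> \<le> R * (r1 + B1)" .
  have "\<bar>Shat d vs tz b - c\<bar> \<le> r2" using score_conc unfolding Shat_def b_def .
  then show ?thesis using segment direction by linarith
qed

lemma root_between_of_sign_change:
  fixes f :: "real \<Rightarrow> real"
  assumes root: "f r = 0"
    and shape: "(continuous_on UNIV f \<and> (\<forall>\<theta>. f \<theta> = 0 \<longrightarrow> \<theta> = r)) \<or> mono f"
    and "p \<le> q" and sign: "f p * f q < 0"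
  shows "p \<le> r \<and> r \<le> q"
  using shape
proof
  assume cont: "continuous_on UNIV f \<and> (\<forall>\<theta>. f \<theta> = 0 \<longrightarrow> \<theta> = r)"
  then have "continuous_on {p..q} f" using continuous_on_subset by blast
  moreover from sign consider "f p \<le> 0" "0 \<le> f q" | "f q \<le> 0" "0 \<le> f p"
    by (fastforce simp: mult_less_0_iff)
  ultimately obtain x where "p \<le> x" "x \<le> q" "f x = 0"
    using IVT'[of f p 0 q] IVT2'[of f q 0 p] \<open>p \<le> q\<close> by metis
  then show ?thesis using cont by auto
next
  assume "mono f"
  then have "f p \<le> f q" using \<open>p \<le> q\<close> by (rule monoD)
  then have "f p < 0 \<and> 0 < f q"
    using sign by (auto simp: mult_less_0_iff)
  moreover have "f r \<le> f p" if "r < p" using \<open>mono f\<close> that by (simp add: monoD)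
  moreover have "f q \<le> f r" if "q < r" using \<open>mono f\<close> that by (simp add: monoD)
  ultimately show ?thesis using root by force
qed

lemma mult_less_0_of_close:
  fixes x y a b :: real
  assumes "\<bar>x - a\<bar> < \<bar>a\<bar>" "\<bar>y - b\<bar> < \<bar>b\<bar>" "a * b < 0"
  shows "x * y < 0"
proof -
  from assms(3) consider "0 < a" "b < 0" | "a < 0" "0 < b" by (auto simp: mult_less_0_iff)
  then show ?thesis
  proof cases
    case 1
    then have "0 < x" "y < 0" using assms(1,2) by linarith+
    then show ?thesis by (simp add: mult_pos_neg)
  next
    case 2
    then have "x < 0" "0 < y" using assms(1,2) by linarith+
    then show ?thesis by (simp add: mult_neg_pos)
  qed
qed

lemma (in prob_space) measure_le_1_minus_if_disjoint:
  assumes "A \<inter> G = {}"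
  shows "measure M A \<le> 1 - measure M G"
proof (cases "A \<in> sets M \<and> G \<in> sets M")
  case True
  then have "measure M A \<le> measure M (space M - G)"
    using assms sets.sets_into_space by (intro finite_measure_mono) auto
  then show ?thesis using True prob_compl by simp
next
  case False
  then show ?thesis
    using measure_notin_sets[of A M] measure_notin_sets[of G M] prob_le_1[of A] prob_le_1[of G]
    by (smt (verit))
qed

lemma (in prob_space) measure_Int_ge:
  "measure M G + measure M H - 1 \<le> measure M (G \<inter> H)"
proof (cases "G \<in> sets M \<and> H \<in> sets M")
  case True
  have "measure M (space M - (G \<inter> H)) \<le> measure M (space M - G) + measure M (space M - H)"
    using True by (subst Diff_Int) (intro measure_subadditive; auto simp: emeasure_finite)
  then show ?thesis using True prob_compl[of "G \<inter> H"] prob_compl[of G] prob_compl[of H] by auto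
next
  case False
  then show ?thesis
    using measure_notin_sets[of G M] measure_notin_sets[of H M] prob_le_1[of G] prob_le_1[of H]
      measure_nonneg[of M "G \<inter> H"]
    by (smt (verit))
qed

text \<open>\<open>P\<close> holds with probability tending to one, measured from inside: the events in
  the assumptions and conclusion of the theorem need not be measurable, and a
  non-measurable event has measure \<open>0\<close>.\<close>

definition whp :: "(nat \<Rightarrow> 'w measure) \<Rightarrow> (nat \<Rightarrow> 'w \<Rightarrow> bool) \<Rightarrow> bool" where
  "whp M P \<longleftrightarrow> (\<exists>G. (\<lambda>n. measure (M n) (G n)) \<longlonglongrightarrow> 1 \<and>
                    eventually (\<lambda>n. \<forall>\<omega>\<in>G n. P n \<omega>) sequentially)"

lemma tendsto_max_0_if_eventually_le:
  fixes f :: "'a \<Rightarrow> real"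
  assumes "\<forall>e>0. eventually (\<lambda>x. f x \<le> e) F"
  shows "((\<lambda>x. max (f x) 0) \<longlongrightarrow> 0) F"
proof (rule order_tendstoI)
  fix e :: real assume "0 < e"
  then have "eventually (\<lambda>x. f x \<le> e / 2) F" using assms half_gt_zero by blast
  then show "eventually (\<lambda>x. max (f x) 0 < e) F"
    by eventually_elim (use \<open>0 < e\<close> in auto)
qed (simp add: less_max_iff_disj always_eventually)

lemma whpI_measure:
  "(\<lambda>n. measure (M n) {\<omega> \<in> space (M n). P n \<omega>}) \<longlonglongrightarrow> 1 \<Longrightarrow> whp M P"
  unfolding whp_def by (intro exI[of _ "\<lambda>n. {\<omega> \<in> space (M n). P n \<omega>}"]) auto

lemma whp_mono:
  assumes "whp M P" and "eventually (\<lambda>n. \<forall>\<omega>. P n \<omega> \<longrightarrow> Q n \<omega>) sequentially"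
  shows "whp M Q"
proof -
  obtain G where "(\<lambda>n. measure (M n) (G n)) \<longlonglongrightarrow> 1" and P: "eventually (\<lambda>n. \<forall>\<omega>\<in>G n. P n \<omega>) sequentially"
    using assms(1) unfolding whp_def by blast
  moreover have "eventually (\<lambda>n. \<forall>\<omega>\<in>G n. Q n \<omega>) sequentially"
    using P assms(2) by eventually_elim blast
  ultimately show ?thesis
    unfolding whp_def by blast
qed

lemma whp_conj:
  assumes prob: "\<forall>n. prob_space (M n)" and "whp M P" and "whp M Q"
  shows "whp M (\<lambda>n \<omega>. P n \<omega> \<and> Q n \<omega>)"
proof -
  obtain G where G: "(\<lambda>n. measure (M n) (G n)) \<longlonglongrightarrow> 1" "eventually (\<lambda>n. \<forall>\<omega>\<in>G n. P n \<omega>) sequentially"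
    using assms(2) unfolding whp_def by blast
  obtain H where H: "(\<lambda>n. measure (M n) (H n)) \<longlonglongrightarrow> 1" "eventually (\<lambda>n. \<forall>\<omega>\<in>H n. Q n \<omega>) sequentially"
    using assms(3) unfolding whp_def by blast
  have lower: "(\<lambda>n. measure (M n) (G n) + measure (M n) (H n) - 1) \<longlonglongrightarrow> 1"
    using tendsto_diff[OF tendsto_add[OF G(1) H(1)] tendsto_const[of 1]] by simp
  have "\<forall>n. measure (M n) (G n) + measure (M n) (H n) - 1 \<le> measure (M n) (G n \<inter> H n)"
    and "\<forall>n. measure (M n) (G n \<inter> H n) \<le> 1"
    using prob_space.measure_Int_ge prob_space.prob_le_1 prob by blast+
  then have "(\<lambda>n. measure (M n) (G n \<inter> H n)) \<longlonglongrightarrow> 1"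
    by (rule tendsto_sandwich[OF always_eventually always_eventually lower tendsto_const])
  moreover have "eventually (\<lambda>n. \<forall>\<omega>\<in>G n \<inter> H n. P n \<omega> \<and> Q n \<omega>) sequentially"
    using G(2) H(2) by eventually_elim blast
  ultimately show ?thesis
    unfolding whp_def by (intro exI[of _ "\<lambda>n. G n \<inter> H n"]) blast
qed

lemma measure_tendsto_0_if_whp_not:
  assumes prob: "\<forall>n. prob_space (M n)" and "whp M (\<lambda>n \<omega>. \<not> P n \<omega>)"
  shows "(\<lambda>n. measure (M n) {\<omega> \<in> space (M n). P n \<omega>}) \<longlonglongrightarrow> 0"
proof -
  obtain G where G: "(\<lambda>n. measure (M n) (G n)) \<longlonglongrightarrow> 1" "eventually (\<lambda>n. \<forall>\<omega>\<in>G n. \<not> P n \<omega>) sequentially"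
    using assms(2) unfolding whp_def by blast
  have lim: "(\<lambda>n. 1 - measure (M n) (G n)) \<longlonglongrightarrow> 0"
    using tendsto_diff[OF tendsto_const[of 1] G(1)] by simp
  have ev: "eventually (\<lambda>n. measure (M n) {\<omega> \<in> space (M n). P n \<omega>} \<le> 1 - measure (M n) (G n)) sequentially"
    using G(2)
  proof eventually_elim
    case (elim n)
    then have "{\<omega> \<in> space (M n). P n \<omega>} \<inter> G n = {}" by blast
    then show ?case
      using prob by (simp add: prob_space.measure_le_1_minus_if_disjoint)
  qed
  show ?thesis
    by (rule tendsto_sandwich[OF always_eventually ev tendsto_const lim]) simp
qed

lemma whp_root_between:
  fixes S :: "nat \<Rightarrow> 'w \<Rightarrow> real \<Rightarrow> real"
  assumes prob: "\<forall>n. prob_space (M n)"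
    and root: "\<forall>n \<omega>. S n \<omega> (r n \<omega>) = 0 \<and>
      ((continuous_on UNIV (S n \<omega>) \<and> (\<forall>\<theta>. S n \<omega> \<theta> = 0 \<longrightarrow> \<theta> = r n \<omega>)) \<or> mono (S n \<omega>))"
    and "p \<le> q" and sign: "c p * c q < 0"
    and close: "\<And>\<theta> \<eta>. \<theta> \<in> {p, q} \<Longrightarrow> 0 < \<eta> \<Longrightarrow> whp M (\<lambda>n \<omega>. \<bar>S n \<omega> \<theta> - c \<theta>\<bar> < \<eta>)"
  shows "whp M (\<lambda>n \<omega>. p \<le> r n \<omega> \<and> r n \<omega> \<le> q)"
proof -
  have "0 < \<bar>c p\<bar>" "0 < \<bar>c q\<bar>" using sign by auto
  then have "whp M (\<lambda>n \<omega>. \<bar>S n \<omega> p - c p\<bar> < \<bar>c p\<bar> \<and> \<bar>S n \<omega> q - c q\<bar> < \<bar>c q\<bar>)"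
    by (intro whp_conj[OF prob] close) auto
  then show ?thesis
  proof (rule whp_mono, intro always_eventually allI impI)
    fix n \<omega>
    assume "\<bar>S n \<omega> p - c p\<bar> < \<bar>c p\<bar> \<and> \<bar>S n \<omega> q - c q\<bar> < \<bar>c q\<bar>"
    then have "S n \<omega> p * S n \<omega> q < 0"
      using mult_less_0_of_close[OF _ _ sign] by blast
    with root[rule_format, of n \<omega>] show "p \<le> r n \<omega> \<and> r n \<omega> \<le> q"
      by (intro root_between_of_sign_change[OF _ _ \<open>p \<le> q\<close>]) auto
  qed
qed

lemma root_consistent:
  fixes S :: "nat \<Rightarrow> 'w \<Rightarrow> real \<Rightarrow> real"
  assumes prob: "\<forall>n. prob_space (M n)"
    and root: "\<forall>n \<omega>. S n \<omega> (r n \<omega>) = 0 \<and>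
      ((continuous_on UNIV (S n \<omega>) \<and> (\<forall>\<theta>. S n \<omega> \<theta> = 0 \<longrightarrow> \<theta> = r n \<omega>)) \<or> mono (S n \<omega>))"
    and "open N" "\<theta>0 \<in> N"
    and sign: "\<forall>\<epsilon>>0. c (\<theta>0 - \<epsilon>) * c (\<theta>0 + \<epsilon>) < 0"
    and close: "\<And>\<theta> \<eta>. \<theta> \<in> N \<Longrightarrow> 0 < \<eta> \<Longrightarrow> whp M (\<lambda>n \<omega>. \<bar>S n \<omega> \<theta> - c \<theta>\<bar> < \<eta>)"
  shows "\<forall>\<epsilon>>0. (\<lambda>n. measure (M n) {\<omega> \<in> space (M n). \<bar>r n \<omega> - \<theta>0\<bar> > \<epsilon>}) \<longlonglongrightarrow> 0"
proof (intro allI impI)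
  fix \<epsilon> :: real assume "0 < \<epsilon>"
  obtain \<delta> where "0 < \<delta>" "ball \<theta>0 \<delta> \<subseteq> N" using \<open>open N\<close> \<open>\<theta>0 \<in> N\<close> openE by blast
  define \<epsilon>' where "\<epsilon>' = min \<epsilon> (\<delta> / 2)"
  have "0 < \<epsilon>'" "\<epsilon>' \<le> \<epsilon>" "\<epsilon>' < \<delta>" using \<open>0 < \<epsilon>\<close> \<open>0 < \<delta>\<close> by (simp_all add: \<epsilon>'_def)
  then have "\<theta>0 - \<epsilon>' \<in> N" "\<theta>0 + \<epsilon>' \<in> N"
    using \<open>ball \<theta>0 \<delta> \<subseteq> N\<close> by (auto simp: dist_real_def)
  then have "whp M (\<lambda>n \<omega>. \<theta>0 - \<epsilon>' \<le> r n \<omega> \<and> r n \<omega> \<le> \<theta>0 + \<epsilon>')"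
    using \<open>0 < \<epsilon>'\<close> sign by (intro whp_root_between[OF prob root]) (auto intro: close)
  then have "whp M (\<lambda>n \<omega>. \<not> \<bar>r n \<omega> - \<theta>0\<bar> > \<epsilon>)"
    by (rule whp_mono, intro always_eventually allI impI) (use \<open>\<epsilon>' \<le> \<epsilon>\<close> in linarith)
  then show "(\<lambda>n. measure (M n) {\<omega> \<in> space (M n). \<bar>r n \<omega> - \<theta>0\<bar> > \<epsilon>}) \<longlonglongrightarrow> 0"
    by (rule measure_tendsto_0_if_whp_not[OF prob])
qed

lemma whp_Shat_close:
  fixes M :: "nat \<Rightarrow> 'w measure"
    and Z :: "nat \<Rightarrow> 'w \<Rightarrow> (nat \<Rightarrow> nat \<Rightarrow> real)"
    and t :: "nat \<Rightarrow> (nat \<Rightarrow> nat \<Rightarrow> real) \<Rightarrow> (nat \<Rightarrow> real) \<Rightarrow> (nat \<Rightarrow> real)"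
    and T :: "nat \<Rightarrow> (nat \<Rightarrow> nat \<Rightarrow> real) \<Rightarrow> (nat \<Rightarrow> real) \<Rightarrow> (nat \<Rightarrow> nat \<Rightarrow> real)"
    and bhat vhat :: "nat \<Rightarrow> 'w \<Rightarrow> nat \<Rightarrow> real"
    and r1 r2 r3 r4 r5 :: "nat \<Rightarrow> real"
  assumes prob: "\<forall>n. prob_space (M n)"
    and t_local: "\<forall>n z \<beta> \<beta>'. (\<forall>j<d n. \<beta> j = \<beta>' j) \<longrightarrow> t n z \<beta> = t n z \<beta>'"
    and T_deriv: "\<forall>n z \<beta> i. i < d n \<longrightarrow>
                    frechet_diff (d n) (\<lambda>b. t n z b i) (\<lambda>j. T n z \<beta> i j) \<beta>"
    and t_conc: "whp M (\<lambda>n \<omega>. supn (d n) (\<lambda>j. t n (Z n \<omega>) (bstar(0 := \<theta>)) j - E j) \<le> r1 n)"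
    and score_conc: "whp M (\<lambda>n \<omega>. \<bar>(\<Sum>j<d n. vstar j * t n (Z n \<omega>) (bstar(0 := \<theta>)) j) - c\<bar> \<le> r2 n)"
    and T_conc: "whp M (\<lambda>n \<omega>. \<forall>\<nu>\<in>{0..1}. supn (d n) (\<lambda>j.
                     (\<Sum>k<d n. vhat n \<omega> k *
                        T n (Z n \<omega>) (\<lambda>i. \<nu> * ((bhat n \<omega>)(0 := \<theta>)) i + (1 - \<nu>) * (bstar(0 := \<theta>)) i) k j)
                     - w j) \<le> r3 n)"
    and bhat_err: "whp M (\<lambda>n \<omega>. l1 (d n) (\<lambda>j. bhat n \<omega> j - bstar j) \<le> r4 n)"
    and vhat_err: "whp M (\<lambda>n \<omega>. l1 (d n) (\<lambda>j. vhat n \<omega> j - vstar j) \<le> r5 n)"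
    and E_bound: "\<forall>j. \<bar>E j\<bar> \<le> B1" and w_bound: "\<forall>j\<ge>1. \<bar>w j\<bar> \<le> B2"
    and radii: "\<forall>e>0. eventually (\<lambda>n. max (max (r1 n) (r2 n)) (r3 n) \<le> e) sequentially"
    and errors: "(\<lambda>n. max (r4 n) (r5 n)) \<longlonglongrightarrow> 0"
    and "0 < \<eta>"
  shows "whp M (\<lambda>n \<omega>. \<bar>Shat (d n) (vhat n \<omega>) (t n (Z n \<omega>)) ((bhat n \<omega>)(0 := \<theta>)) - c\<bar> < \<eta>)"
proof -
  define \<rho> where "\<rho> n = max (max (max (r1 n) (r2 n)) (r3 n)) 0" for n
  define R where "R n = max (r4 n) (r5 n)" for n
  have "\<rho> \<longlonglongrightarrow> 0"
    using radii unfolding \<rho>_def by (rule tendsto_max_0_if_eventually_le)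
  then have "(\<lambda>n. \<rho> n + R n * (\<rho> n + B1) + (\<rho> n + B2) * R n) \<longlonglongrightarrow> 0 + 0 * (0 + B1) + (0 + B2) * 0"
    using errors unfolding R_def by (intro tendsto_intros)
  then have small: "eventually (\<lambda>n. \<rho> n + R n * (\<rho> n + B1) + (\<rho> n + B2) * R n < \<eta>) sequentially"
    using \<open>0 < \<eta>\<close> by (intro order_tendstoD) simp_all
  define Good where "Good n \<omega> \<longleftrightarrow>
      supn (d n) (\<lambda>j. t n (Z n \<omega>) (bstar(0 := \<theta>)) j - E j) \<le> r1 n \<and>
      \<bar>(\<Sum>j<d n. vstar j * t n (Z n \<omega>) (bstar(0 := \<theta>)) j) - c\<bar> \<le> r2 n \<and>
      (\<forall>\<nu>\<in>{0..1}. supn (d n) (\<lambda>j. (\<Sum>k<d n. vhat n \<omega> k *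
         T n (Z n \<omega>) (\<lambda>i. \<nu> * ((bhat n \<omega>)(0 := \<theta>)) i + (1 - \<nu>) * (bstar(0 := \<theta>)) i) k j) - w j) \<le> r3 n) \<and>
      l1 (d n) (\<lambda>j. bhat n \<omega> j - bstar j) \<le> r4 n \<and> l1 (d n) (\<lambda>j. vhat n \<omega> j - vstar j) \<le> r5 n" for n \<omega>
  have "whp M Good"
    unfolding Good_def
    using whp_conj[OF prob t_conc whp_conj[OF prob score_conc whp_conj[OF prob T_conc
            whp_conj[OF prob bhat_err vhat_err]]]] .
  moreover have "eventually (\<lambda>n. \<forall>\<omega>. Good n \<omega> \<longrightarrow>
      \<bar>Shat (d n) (vhat n \<omega>) (t n (Z n \<omega>)) ((bhat n \<omega>)(0 := \<theta>)) - c\<bar> < \<eta>) sequentially"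
    using small
  proof (eventually_elim, intro allI impI)
    fix n \<omega> assume lt: "\<rho> n + R n * (\<rho> n + B1) + (\<rho> n + B2) * R n < \<eta>" and good: "Good n \<omega>"
    from good have errs: "l1 (d n) (\<lambda>j. bhat n \<omega> j - bstar j) \<le> R n"
        "l1 (d n) (\<lambda>j. vhat n \<omega> j - vstar j) \<le> R n"
      unfolding Good_def R_def by auto
    have R: "0 \<le> R n" using errs(1) l1_nonneg[of "d n" "\<lambda>j. bhat n \<omega> j - bstar j"] by linarith
    have "\<bar>Shat (d n) (vhat n \<omega>) (t n (Z n \<omega>)) ((bhat n \<omega>)(0 := \<theta>)) - c\<bar>
        \<le> r2 n + R n * (r1 n + B1) + (r3 n + B2) * R n"
      using good errs t_local T_deriv E_bound w_bound unfolding Good_def by (intro Shat_deviation_bound) auto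
    also have "\<dots> \<le> \<rho> n + R n * (\<rho> n + B1) + (\<rho> n + B2) * R n"
      using R unfolding \<rho>_def by (intro add_mono mult_left_mono mult_right_mono) auto
    finally show "\<bar>Shat (d n) (vhat n \<omega>) (t n (Z n \<omega>)) ((bhat n \<omega>)(0 := \<theta>)) - c\<bar> < \<eta>"
      using lt by linarith
  qed
  ultimately show ?thesis
    by (rule whp_mono)
qed

theorem theorem1:
  fixes M :: "nat \<Rightarrow> 'w measure"
    and d :: "nat \<Rightarrow> nat"
    and Z :: "nat \<Rightarrow> 'w \<Rightarrow> (nat \<Rightarrow> nat \<Rightarrow> real)"
    and t :: "nat \<Rightarrow> (nat \<Rightarrow> nat \<Rightarrow> real) \<Rightarrow> (nat \<Rightarrow> real) \<Rightarrow> (nat \<Rightarrow> real)"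
    and T :: "nat \<Rightarrow> (nat \<Rightarrow> nat \<Rightarrow> real) \<Rightarrow> (nat \<Rightarrow> real) \<Rightarrow> (nat \<Rightarrow> nat \<Rightarrow> real)"
    and Et :: "(nat \<Rightarrow> real) \<Rightarrow> (nat \<Rightarrow> real)"
    and ET :: "(nat \<Rightarrow> real) \<Rightarrow> (nat \<Rightarrow> nat \<Rightarrow> real)"
    and bstar vstar :: "nat \<Rightarrow> real"
    and lam lam' :: "nat \<Rightarrow> real"
    and bhat vhat :: "nat \<Rightarrow> 'w \<Rightarrow> nat \<Rightarrow> real"
    and thtil :: "nat \<Rightarrow> 'w \<Rightarrow> real"
    and N :: "real set"
    and r1 r2 r3 :: "nat \<Rightarrow> real \<Rightarrow> real"
    and r4 r5 :: "nat \<Rightarrow> real"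
  assumes prob: "\<forall>n. prob_space (M n)"
    and dpos: "\<forall>n. 1 \<le> d n"
    and t_local: "\<forall>n z \<beta> \<beta>'. (\<forall>j<d n. \<beta> j = \<beta>' j) \<longrightarrow> t n z \<beta> = t n z \<beta>'"
    and t_supp: "\<forall>n z \<beta> j. d n \<le> j \<longrightarrow> t n z \<beta> j = 0"
    and T_deriv: "\<forall>n z \<beta> i. i < d n \<longrightarrow>
                    frechet_diff (d n) (\<lambda>b. t n z b i) (\<lambda>j. T n z \<beta> i j) \<beta>"
    and T_diff2: "\<forall>n z \<beta> i j. i < d n \<and> j < d n \<longrightarrow>
                    (\<exists>D. frechet_diff (d n) (\<lambda>b. T n z b i j) D \<beta>)"
    and Et_lim: "\<forall>\<beta> i. (\<lambda>n. integral\<^sup>L (M n) (\<lambda>\<omega>. t n (Z n \<omega>) \<beta> i)) \<longlonglongrightarrow> Et \<beta> i"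
    and ET_lim: "\<forall>\<beta> i j. (\<lambda>n. integral\<^sup>L (M n) (\<lambda>\<omega>. T n (Z n \<omega>) \<beta> i j)) \<longlonglongrightarrow> ET \<beta> i j"
    and root: "\<forall>i. Et bstar i = 0"
    and root_unique: "\<forall>\<beta>. (\<forall>i. Et \<beta> i = 0) \<longrightarrow> (\<forall>j\<in>active d. \<beta> j = bstar j)"
    and vstar_def: "\<exists>Inv. (\<forall>i\<in>active d. \<forall>j\<in>active d.
                        ((\<lambda>k. Inv i k * ET bstar k j) has_sum (if i = j then 1 else 0)) (active d) \<and>
                        ((\<lambda>k. ET bstar i k * Inv k j) has_sum (if i = j then 1 else 0)) (active d))
                     \<and> (\<forall>j. vstar j = (if j \<in> active d then Inv 0 j else 0))"
    and lam_pos: "\<forall>n. 0 < lam n \<and> 0 < lam' n"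
    and bhat_def: "\<forall>n \<omega>. (\<exists>b. supp_in (d n) b \<and> supn (d n) (t n (Z n \<omega>) b) \<le> lam n) \<longrightarrow>
                      is_l1_min (d n) (t n (Z n \<omega>)) (lam n) (bhat n \<omega>)"
    and vhat_def: "\<forall>n \<omega>. (\<exists>v. supp_in (d n) v \<and>
                         supn (d n) (\<lambda>j. (\<Sum>k<d n. v k * T n (Z n \<omega>) (bhat n \<omega>) k j) - e1 j) \<le> lam' n) \<longrightarrow>
                      is_l1_min (d n) (\<lambda>v j. (\<Sum>k<d n. v k * T n (Z n \<omega>) (bhat n \<omega>) k j) - e1 j)
                                (lam' n) (vhat n \<omega>)"
    and root_shape: "\<forall>n \<omega>.
        Shat (d n) (vhat n \<omega>) (t n (Z n \<omega>)) ((bhat n \<omega>)(0 := thtil n \<omega>)) = 0 \<and>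
        ((continuous_on UNIV (\<lambda>\<theta>. Shat (d n) (vhat n \<omega>) (t n (Z n \<omega>)) ((bhat n \<omega>)(0 := \<theta>))) \<and>
          (\<forall>\<theta>. Shat (d n) (vhat n \<omega>) (t n (Z n \<omega>)) ((bhat n \<omega>)(0 := \<theta>)) = 0 \<longrightarrow> \<theta> = thtil n \<omega>))
         \<or> mono (\<lambda>\<theta>. Shat (d n) (vhat n \<omega>) (t n (Z n \<omega>)) ((bhat n \<omega>)(0 := \<theta>))))"
    and N_nhd: "open N \<and> bstar 0 \<in> N"
    and r_small: "\<forall>e>0. eventually (\<lambda>n. \<forall>\<theta>\<in>N. max (max (r1 n \<theta>) (r2 n \<theta>)) (r3 n \<theta>) \<le> e) sequentially"
    and conc1: "\<forall>\<theta>\<in>N. (\<lambda>n. measure (M n) {\<omega> \<in> space (M n).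
                  supn (d n) (\<lambda>j. t n (Z n \<omega>) (bstar(0 := \<theta>)) j - Et (bstar(0 := \<theta>)) j) \<le> r1 n \<theta>})
                \<longlonglongrightarrow> 1"
    and conc2: "\<forall>\<theta>\<in>N. (\<lambda>n. measure (M n) {\<omega> \<in> space (M n).
                  \<bar>(\<Sum>j<d n. vstar j * t n (Z n \<omega>) (bstar(0 := \<theta>)) j) - vdot vstar (Et (bstar(0 := \<theta>)))\<bar>
                    \<le> r2 n \<theta>})
                \<longlonglongrightarrow> 1"
    and conc3: "\<forall>\<theta>\<in>N. (\<lambda>n. measure (M n) {\<omega> \<in> space (M n).
                  \<forall>\<nu>\<in>{0..1}. supn (d n) (\<lambda>j.
                     (\<Sum>k<d n. vhat n \<omega> k *
                        T n (Z n \<omega>) (\<lambda>i. \<nu> * ((bhat n \<omega>)(0 := \<theta>)) i + (1 - \<nu>) * (bstar(0 := \<theta>)) i) k j)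
                     - vrow vstar (ET (bstar(0 := \<theta>))) j) \<le> r3 n \<theta>})
                \<longlonglongrightarrow> 1"
    and Et_bdd: "\<exists>B. \<forall>\<theta>\<in>N. \<forall>j. \<bar>Et (bstar(0 := \<theta>)) j\<bar> \<le> B"
    and vET_bdd: "\<exists>B. \<forall>\<theta>\<in>N. \<forall>j\<ge>1. \<bar>vrow vstar (ET (bstar(0 := \<theta>))) j\<bar> \<le> B"
    and L1_beta: "(\<lambda>n. measure (M n) {\<omega> \<in> space (M n).
                    l1 (d n) (\<lambda>j. bhat n \<omega> j - bstar j) \<le> r4 n}) \<longlonglongrightarrow> 1"
    and L1_v: "(\<lambda>n. measure (M n) {\<omega> \<in> space (M n).
                    l1 (d n) (\<lambda>j. vhat n \<omega> j - vstar j) \<le> r5 n}) \<longlonglongrightarrow> 1"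
    and r45: "(\<lambda>n. max (r4 n) (r5 n)) \<longlonglongrightarrow> 0"
    and sign: "\<forall>\<epsilon>>0. vdot vstar (Et (bstar(0 := bstar 0 - \<epsilon>))) *
                      vdot vstar (Et (bstar(0 := bstar 0 + \<epsilon>))) < 0"
  shows "\<forall>\<epsilon>>0. (\<lambda>n. measure (M n) {\<omega> \<in> space (M n). \<bar>thtil n \<omega> - bstar 0\<bar> > \<epsilon>})
                  \<longlonglongrightarrow> 0"
proof (rule root_consistent[OF prob root_shape N_nhd[THEN conjunct1] N_nhd[THEN conjunct2] sign])
  fix \<theta> \<eta> :: real assume "\<theta> \<in> N" "0 < \<eta>"
  obtain B1 B2 where "\<forall>j. \<bar>Et (bstar(0 := \<theta>)) j\<bar> \<le> B1"
    and "\<forall>j\<ge>1. \<bar>vrow vstar (ET (bstar(0 := \<theta>))) j\<bar> \<le> B2"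
    using Et_bdd vET_bdd \<open>\<theta> \<in> N\<close> by blast
  moreover have "\<forall>e>0. eventually (\<lambda>n. max (max (r1 n \<theta>) (r2 n \<theta>)) (r3 n \<theta>) \<le> e) sequentially"
    using r_small \<open>\<theta> \<in> N\<close> by (blast intro: eventually_mono)
  ultimately show "whp M (\<lambda>n \<omega>. \<bar>Shat (d n) (vhat n \<omega>) (t n (Z n \<omega>)) ((bhat n \<omega>)(0 := \<theta>))
                                 - vdot vstar (Et (bstar(0 := \<theta>)))\<bar> < \<eta>)"
    using whp_Shat_close[OF prob t_local T_deriv
        whpI_measure[OF conc1[rule_format, OF \<open>\<theta> \<in> N\<close>]] whpI_measure[OF conc2[rule_format, OF \<open>\<theta> \<in> N\<close>]]
        whpI_measure[OF conc3[rule_format, OF \<open>\<theta> \<in> N\<close>]] whpI_measure[OF L1_beta] whpI_measure[OF L1_v]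
        _ _ _ r45 \<open>0 < \<eta>\<close>]
    by blast
qed

end
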